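(* Let $C=U_d\cdots U_1$ be a Clifford circuit of depth $d$ on $n$ qubits, with $C_i=U_i\cdots U_1$ and $\mathcal C_i(s)=C_isC_i^\dagger$. For a set of qubits $A$ and an integer $w$, let $S_w^A$ be the set of phaseless Pauli operators $s\in\{I,X,Y,Z\}^{\otimes n}$ such that $\min_i|\mathcal C_i(s)|=w$ and, for every $i$, $\mathcal C_i(s)$ is supported only in $A$. Then $|S_w^A|\le d\binom{|A|}{w}3^w$.
   Context: $|P|$ denotes the weight of a Pauli operator $P$, i.e. the number of qubits on which it acts as a non-identity single-qubit Pauli (phases are ignored). The minimum and the support condition range over the timesteps $i=1,\dots,d$. *)

theory Defs
  imports Complex_Main "Jordan_Normal_Form.Matrix"
begin

datatype pauli = PI | PX | PY | PZ

definition pauli_mat1 :: "pauli \<Rightarrow> complex mat" where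
  "pauli_mat1 p = (case p of
      PI \<Rightarrow> mat_of_rows_list 2 [[1, 0], [0, 1]]
    | PX \<Rightarrow> mat_of_rows_list 2 [[0, 1], [1, 0]]
    | PY \<Rightarrow> mat_of_rows_list 2 [[0, -\<i>], [\<i>, 0]]
    | PZ \<Rightarrow> mat_of_rows_list 2 [[1, 0], [0, -1]])"

definition kron :: "complex mat \<Rightarrow> complex mat \<Rightarrow> complex mat" where
  "kron A B = mat (dim_row A * dim_row B) (dim_col A * dim_col B)
     (\<lambda>(i, j). A $$ (i div dim_row B, j div dim_col B) * B $$ (i mod dim_row B, j mod dim_col B))"

definition adj :: "complex mat \<Rightarrow> complex mat" where
  "adj A = mat (dim_col A) (dim_row A) (\<lambda>(i, j). cnj (A $$ (j, i)))"

definition unitary_mat :: "nat \<Rightarrow> complex mat \<Rightarrow> bool" where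
  "unitary_mat N U \<longleftrightarrow> U \<in> carrier_mat N N \<and> U * adj U = 1\<^sub>m N \<and> adj U * U = 1\<^sub>m N"

text \<open>A phaseless n-qubit Pauli operator is a string s, with s j the factor on qubit j (j < n);
  positions j \<ge> n are fixed to I.\<close>

definition paulis :: "nat \<Rightarrow> (nat \<Rightarrow> pauli) set" where
  "paulis n = {s. \<forall>j\<ge>n. s j = PI}"

fun pauli_mat :: "nat \<Rightarrow> (nat \<Rightarrow> pauli) \<Rightarrow> complex mat" where
  "pauli_mat 0 s = 1\<^sub>m 1"
| "pauli_mat (Suc n) s = kron (pauli_mat n s) (pauli_mat1 (s n))"

definition weight :: "nat \<Rightarrow> (nat \<Rightarrow> pauli) \<Rightarrow> nat" where
  "weight n s = card {j. j < n \<and> s j \<noteq> PI}"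

definition supported_in :: "(nat \<Rightarrow> pauli) \<Rightarrow> nat set \<Rightarrow> bool" where
  "supported_in s A \<longleftrightarrow> (\<forall>j. s j \<noteq> PI \<longrightarrow> j \<in> A)"

definition clifford :: "nat \<Rightarrow> complex mat \<Rightarrow> bool" where
  "clifford n U \<longleftrightarrow> unitary_mat (2 ^ n) U \<and>
     (\<forall>s\<in>paulis n. \<exists>t\<in>paulis n. \<exists>c::complex. U * pauli_mat n s * adj U = c \<cdot>\<^sub>m pauli_mat n t)"

definition conj_pauli :: "nat \<Rightarrow> complex mat \<Rightarrow> (nat \<Rightarrow> pauli) \<Rightarrow> (nat \<Rightarrow> pauli)" where
  "conj_pauli n U s = (THE t. t \<in> paulis n \<and>
      (\<exists>c::complex. U * pauli_mat n s * adj U = c \<cdot>\<^sub>m pauli_mat n t))"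

fun prefix :: "nat \<Rightarrow> (nat \<Rightarrow> complex mat) \<Rightarrow> nat \<Rightarrow> complex mat" where
  "prefix n U 0 = 1\<^sub>m (2 ^ n)"
| "prefix n U (Suc i) = U (Suc i) * prefix n U i"

definition S_set :: "nat \<Rightarrow> nat \<Rightarrow> (nat \<Rightarrow> complex mat) \<Rightarrow> nat set \<Rightarrow> nat \<Rightarrow> (nat \<Rightarrow> pauli) set" where
  "S_set n d U A w = {s \<in> paulis n.
      Min ((\<lambda>i. weight n (conj_pauli n (prefix n U i) s)) ` {1..d}) = w \<and>
      (\<forall>i\<in>{1..d}. supported_in (conj_pauli n (prefix n U i) s) A)}"

end

theory Submission
  imports Defs
begin

text \<open>Every s in S_w^A attains its minimal weight w at some timestep i, so that C_i(s) is a
  weight-w Pauli supported in A; there are at most (|A| choose w) 3^w of those. Conjugation by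
  the Clifford unitary C_i permutes the phaseless Paulis, hence each timestep accounts for at
  most that many elements s, and the d timesteps together for at most d times as many.\<close>

lemma dim_pauli_mat1 [simp]:
  "dim_row (pauli_mat1 p) = 2" "dim_col (pauli_mat1 p) = 2"
  by (simp_all add: pauli_mat1_def mat_of_rows_list_def split: pauli.split)

lemma index_pauli_mat1:
  "pauli_mat1 p $$ (0,0) = (case p of PI \<Rightarrow> 1 | PX \<Rightarrow> 0 | PY \<Rightarrow> 0 | PZ \<Rightarrow> 1)"
  "pauli_mat1 p $$ (0,1) = (case p of PI \<Rightarrow> 0 | PX \<Rightarrow> 1 | PY \<Rightarrow> -\<i> | PZ \<Rightarrow> 0)"
  "pauli_mat1 p $$ (1,0) = (case p of PI \<Rightarrow> 0 | PX \<Rightarrow> 1 | PY \<Rightarrow> \<i> | PZ \<Rightarrow> 0)"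
  "pauli_mat1 p $$ (1,1) = (case p of PI \<Rightarrow> 1 | PX \<Rightarrow> 0 | PY \<Rightarrow> 0 | PZ \<Rightarrow> -1)"
  by (simp_all add: pauli_mat1_def mat_of_rows_list_def split: pauli.split)

lemma pauli_mat1_nonzero_entry: "\<exists>a<2. \<exists>b<2. pauli_mat1 p $$ (a,b) \<noteq> 0"
proof -
  have "pauli_mat1 p $$ (0,0) \<noteq> 0 \<or> pauli_mat1 p $$ (0,1) \<noteq> 0"
    unfolding index_pauli_mat1 by (cases p) simp_all
  moreover have "(0::nat) < 2" "(1::nat) < 2"
    by simp_all
  ultimately show ?thesis
    by blast
qed

lemma pauli_mat1_scaled_eqD:
  assumes "x \<noteq> 0" and "\<forall>a<2. \<forall>b<2. x * pauli_mat1 p $$ (a,b) = y * pauli_mat1 q $$ (a,b)"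
  shows "p = q"
proof -
  have "x * pauli_mat1 p $$ (a,b) = y * pauli_mat1 q $$ (a,b)" if "a < 2" "b < 2" for a b
    using assms(2) that by blast
  from this[of 0 0] this[of 0 1] this[of 1 0] this[of 1 1] show ?thesis
    unfolding index_pauli_mat1 using assms(1) by (cases p; cases q) auto
qed

lemma dim_kron [simp]:
  "dim_row (kron A B) = dim_row A * dim_row B" "dim_col (kron A B) = dim_col A * dim_col B"
  by (simp_all add: kron_def)

lemma index_kron:
  "i < dim_row A * dim_row B \<Longrightarrow> j < dim_col A * dim_col B \<Longrightarrow>
   kron A B $$ (i,j) = A $$ (i div dim_row B, j div dim_col B) * B $$ (i mod dim_row B, j mod dim_col B)"
  unfolding kron_def by (subst index_mat(1)) auto

lemma dim_pauli_mat [simp]: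
  "dim_row (pauli_mat n s) = 2^n" "dim_col (pauli_mat n s) = 2^n"
  by (induction n) auto

lemma pauli_mat_carrier [simp]: "pauli_mat n s \<in> carrier_mat (2^n) (2^n)"
  by (rule carrier_matI) simp_all

lemma index_pauli_mat_Suc:
  assumes "i < 2^n" "j < 2^n" "a < 2" "b < 2"
  shows "pauli_mat (Suc n) s $$ (2*i + a, 2*j + b) = pauli_mat n s $$ (i,j) * pauli_mat1 (s n) $$ (a,b)"
proof -
  have "2*i + a < 2^n * 2" "2*j + b < 2^n * 2"
    using assms by linarith+
  moreover have "(2*i + a) div 2 = i" "(2*j + b) div 2 = j" "(2*i + a) mod 2 = a" "(2*j + b) mod 2 = b"
    using assms by simp_all
  ultimately show ?thesis
    unfolding pauli_mat.simps by (subst index_kron) simp_all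
qed

lemma pauli_mat_nonzero_entry: "\<exists>i<2^n. \<exists>j<2^n. pauli_mat n s $$ (i,j) \<noteq> 0"
proof (induction n)
  case 0
  then show ?case by simp
next
  case (Suc n)
  then obtain i j where ij: "i < 2^n" "j < 2^n" "pauli_mat n s $$ (i,j) \<noteq> 0"
    by blast
  obtain a b where ab: "a < 2" "b < 2" "pauli_mat1 (s n) $$ (a,b) \<noteq> 0"
    using pauli_mat1_nonzero_entry by blast
  have "2*i + a < 2^Suc n" "2*j + b < 2^Suc n"
    using ij ab by auto
  with ij ab show ?case
    by (metis index_pauli_mat_Suc mult_eq_0_iff)
qed

lemma pauli_mat_neq_zero: "pauli_mat n s \<noteq> 0\<^sub>m (2^n) (2^n)"
  using pauli_mat_nonzero_entry[of n s] by auto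

text \<open>The entries of a Kronecker product factor, and a nonzero entry of the first factor
  isolates the last tensor factor.\<close>

lemma pauli_mat_scaled_eqD:
  assumes "c \<noteq> 0" and "c \<cdot>\<^sub>m pauli_mat n s = c' \<cdot>\<^sub>m pauli_mat n t"
  shows "\<forall>j<n. s j = t j"
  using assms
proof (induction n arbitrary: c c')
  case 0
  then show ?case by simp
next
  case (Suc n)
  have entries: "c * (pauli_mat n s $$ (i,j) * pauli_mat1 (s n) $$ (a,b))
      = c' * (pauli_mat n t $$ (i,j) * pauli_mat1 (t n) $$ (a,b))"
    if ij: "i < 2^n" "j < 2^n" and ab: "a < 2" "b < 2" for i j a b
  proof -
    have "2*i + a < 2^Suc n" "2*j + b < 2^Suc n"
      using ij ab by auto
    moreover have "(c \<cdot>\<^sub>m pauli_mat (Suc n) s) $$ (2*i + a, 2*j + b)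
        = (c' \<cdot>\<^sub>m pauli_mat (Suc n) t) $$ (2*i + a, 2*j + b)"
      using Suc.prems(2) by simp
    ultimately show ?thesis
      by (simp del: pauli_mat.simps add: index_pauli_mat_Suc[OF ij ab])
  qed
  obtain i0 j0 where ij0: "i0 < 2^n" "j0 < 2^n" "pauli_mat n s $$ (i0,j0) \<noteq> 0"
    using pauli_mat_nonzero_entry by blast
  have last: "s n = t n"
    by (rule pauli_mat1_scaled_eqD[of "c * pauli_mat n s $$ (i0,j0)" _ "c' * pauli_mat n t $$ (i0,j0)"])
      (use ij0 Suc.prems(1) entries in \<open>auto simp: mult.assoc\<close>)
  obtain a0 b0 where ab0: "a0 < 2" "b0 < 2" "pauli_mat1 (s n) $$ (a0,b0) \<noteq> 0"
    using pauli_mat1_nonzero_entry by blast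
  have "c \<cdot>\<^sub>m pauli_mat n s = c' \<cdot>\<^sub>m pauli_mat n t"
  proof (rule eq_matI)
    fix i j
    assume "i < dim_row (c' \<cdot>\<^sub>m pauli_mat n t)" "j < dim_col (c' \<cdot>\<^sub>m pauli_mat n t)"
    then have ij: "i < 2^n" "j < 2^n" by simp_all
    have "(c * pauli_mat n s $$ (i,j)) * pauli_mat1 (s n) $$ (a0,b0)
        = (c' * pauli_mat n t $$ (i,j)) * pauli_mat1 (s n) $$ (a0,b0)"
      using entries[OF ij ab0(1,2)] last by (simp add: mult.assoc)
    with ab0(3) ij show "(c \<cdot>\<^sub>m pauli_mat n s) $$ (i,j) = (c' \<cdot>\<^sub>m pauli_mat n t) $$ (i,j)"
      by simp
  qed simp_all
  with Suc.IH[OF Suc.prems(1)] last show ?case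
    by (auto simp: less_Suc_eq)
qed

lemma paulis_eqI:
  assumes "s \<in> paulis n" "t \<in> paulis n" "\<forall>j<n. s j = t j"
  shows "s = t"
proof
  fix j
  show "s j = t j"
    using assms by (cases "j < n") (simp_all add: paulis_def)
qed

lemma dim_adj [simp]: "dim_row (adj A) = dim_col A" "dim_col (adj A) = dim_row A"
  by (simp_all add: adj_def)

lemma adj_carrier_mat [simp]: "A \<in> carrier_mat N N \<Longrightarrow> adj A \<in> carrier_mat N N"
  by (rule carrier_matI) (auto dest: carrier_matD)

lemma index_adj: "i < dim_col A \<Longrightarrow> j < dim_row A \<Longrightarrow> adj A $$ (i,j) = cnj (A $$ (j,i))"
  by (simp add: adj_def)

lemma adj_one [simp]: "adj (1\<^sub>m N) = 1\<^sub>m N"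
  by (rule eq_matI) (auto simp: index_adj)

lemma adj_mult:
  assumes "dim_col A = dim_row B"
  shows "adj (A * B) = adj B * adj A"
proof (rule eq_matI)
  fix i j
  assume "i < dim_row (adj B * adj A)" "j < dim_col (adj B * adj A)"
  then have ij: "i < dim_col B" "j < dim_row A" by simp_all
  have "adj (A * B) $$ (i,j) = (\<Sum>k<dim_col A. cnj (A $$ (j,k)) * cnj (B $$ (k,i)))"
    using ij assms by (simp add: index_adj scalar_prod_def atLeast0LessThan)
  also have "\<dots> = (adj B * adj A) $$ (i,j)"
    using ij assms by (simp add: index_adj scalar_prod_def atLeast0LessThan mult.commute)
  finally show "adj (A * B) $$ (i,j) = (adj B * adj A) $$ (i,j)" .
qed simp_all

lemma one_smult_mat [simp]: "(1 :: 'a :: monoid_mult) \<cdot>\<^sub>m A = A"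
  by (rule eq_matI) simp_all

lemma zero_smult_mat [simp]: "(0 :: 'a :: mult_zero) \<cdot>\<^sub>m A = 0\<^sub>m (dim_row A) (dim_col A)"
  by (rule eq_matI) simp_all

lemma smult_smult_mat: "a \<cdot>\<^sub>m (b \<cdot>\<^sub>m M) = (a * b :: 'a :: semigroup_mult) \<cdot>\<^sub>m M"
  by (rule eq_matI) (simp_all add: mult.assoc)

lemma unitary_mat_carrier: "unitary_mat N V \<Longrightarrow> V \<in> carrier_mat N N"
  by (simp add: unitary_mat_def)

lemma unitary_mat_one: "unitary_mat N (1\<^sub>m N)"
  by (simp add: unitary_mat_def)

lemma unitary_mat_mult:
  assumes U: "unitary_mat N U" and V: "unitary_mat N V"
  shows "unitary_mat N (U * V)"
proof -
  have carr: "U \<in> carrier_mat N N" "V \<in> carrier_mat N N" "adj U \<in> carrier_mat N N" "adj V \<in> carrier_mat N N"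
    using U V by (simp_all add: unitary_mat_def)
  have adj_UV: "adj (U * V) = adj V * adj U"
    using carr by (simp add: adj_mult)
  have "(U * V) * adj (U * V) = U * (V * adj V) * adj U"
    unfolding adj_UV using carr by (simp add: assoc_mult_mat[of _ N N _ N _ N] mult_carrier_mat[of _ N N _ N])
  moreover have "adj (U * V) * (U * V) = adj V * (adj U * U) * V"
    unfolding adj_UV using carr by (simp add: assoc_mult_mat[of _ N N _ N _ N] mult_carrier_mat[of _ N N _ N])
  ultimately show ?thesis
    using U V carr by (simp add: unitary_mat_def)
qed

lemma conj_mult_mat:
  assumes "U \<in> carrier_mat N N" "V \<in> carrier_mat N N" "X \<in> carrier_mat N N"
  shows "(U * V) * X * adj (U * V) = U * (V * X * adj V) * adj U"
  using assms by (simp add: adj_mult assoc_mult_mat[of _ N N _ N _ N] mult_carrier_mat[of _ N N _ N])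

lemma mult_smult_mult_mat:
  assumes "A \<in> carrier_mat nr n" "X \<in> carrier_mat n m" "B \<in> carrier_mat m nc"
  shows "A * (k \<cdot>\<^sub>m X) * B = (k :: 'a :: comm_semiring_0) \<cdot>\<^sub>m (A * X * B)"
  using assms by (simp add: mult_smult_distrib[of A nr n X m] mult_smult_assoc_mat[of _ nr m B nc])

lemma unitary_conj_cancel:
  assumes "unitary_mat N V" "X \<in> carrier_mat N N"
  shows "adj V * (V * X * adj V) * V = X"
proof -
  have carr: "V \<in> carrier_mat N N" "adj V \<in> carrier_mat N N"
    using assms(1) by (simp_all add: unitary_mat_def)
  then have "adj V * (V * X * adj V) * V = (adj V * V) * X * (adj V * V)"
    using assms(2) by (simp add: assoc_mult_mat[of _ N N _ N _ N] mult_carrier_mat[of _ N N _ N])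
  then show ?thesis
    using assms by (simp add: unitary_mat_def)
qed

lemma clifford_one: "clifford n (1\<^sub>m (2^n))"
  unfolding clifford_def
proof (intro conjI ballI)
  show "unitary_mat (2^n) (1\<^sub>m (2^n))"
    by (rule unitary_mat_one)
  fix s
  assume "s \<in> paulis n"
  moreover have "1\<^sub>m (2^n) * pauli_mat n s * adj (1\<^sub>m (2^n)) = 1 \<cdot>\<^sub>m pauli_mat n s"
    by simp
  ultimately show "\<exists>t\<in>paulis n. \<exists>c. 1\<^sub>m (2^n) * pauli_mat n s * adj (1\<^sub>m (2^n)) = c \<cdot>\<^sub>m pauli_mat n t"
    by blast
qed

lemma clifford_mult:
  assumes U: "clifford n U" and V: "clifford n V"
  shows "clifford n (U * V)"
  unfolding clifford_def
proof (intro conjI ballI)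
  have U': "unitary_mat (2^n) U" and V': "unitary_mat (2^n) V"
    using U V by (simp_all add: clifford_def)
  then show "unitary_mat (2^n) (U * V)"
    by (rule unitary_mat_mult)
  fix s
  assume "s \<in> paulis n"
  then obtain t c where t: "t \<in> paulis n" and c: "V * pauli_mat n s * adj V = c \<cdot>\<^sub>m pauli_mat n t"
    using V by (auto simp: clifford_def)
  then obtain t' c' where t': "t' \<in> paulis n" and c': "U * pauli_mat n t * adj U = c' \<cdot>\<^sub>m pauli_mat n t'"
    using U by (auto simp: clifford_def)
  have carr: "U \<in> carrier_mat (2^n) (2^n)" "V \<in> carrier_mat (2^n) (2^n)"
    using U' V' by (simp_all add: unitary_mat_carrier)
  have "(U * V) * pauli_mat n s * adj (U * V) = U * (c \<cdot>\<^sub>m pauli_mat n t) * adj U"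
    using carr by (simp add: conj_mult_mat c)
  also have "\<dots> = c \<cdot>\<^sub>m (U * pauli_mat n t * adj U)"
    using carr by (intro mult_smult_mult_mat) auto
  also have "\<dots> = (c * c') \<cdot>\<^sub>m pauli_mat n t'"
    by (simp add: c' smult_smult_mat)
  finally show "\<exists>t\<in>paulis n. \<exists>c. (U * V) * pauli_mat n s * adj (U * V) = c \<cdot>\<^sub>m pauli_mat n t"
    using t' by blast
qed

lemma clifford_prefix: "\<forall>i\<in>{1..d}. clifford n (U i) \<Longrightarrow> i \<le> d \<Longrightarrow> clifford n (prefix n U i)"
  by (induction i) (simp_all add: clifford_one clifford_mult)

lemma clifford_conj_pauli_scalar_nonzero:
  assumes V: "clifford n V" and "V * pauli_mat n s * adj V = c \<cdot>\<^sub>m pauli_mat n t"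
  shows "c \<noteq> 0"
proof
  assume "c = 0"
  have V': "unitary_mat (2^n) V"
    using V by (simp add: clifford_def)
  have "pauli_mat n s = adj V * (V * pauli_mat n s * adj V) * V"
    using unitary_conj_cancel[OF V' pauli_mat_carrier] by simp
  also have "\<dots> = 0\<^sub>m (2^n) (2^n)"
    using \<open>c = 0\<close> unitary_mat_carrier[OF V'] by (simp add: assms(2))
  finally show False
    using pauli_mat_neq_zero by blast
qed

lemma clifford_conj_pauli:
  assumes V: "clifford n V" and s: "s \<in> paulis n"
  shows "conj_pauli n V s \<in> paulis n"
    and "\<exists>c. V * pauli_mat n s * adj V = c \<cdot>\<^sub>m pauli_mat n (conj_pauli n V s)"
proof -
  let ?P = "\<lambda>t. t \<in> paulis n \<and> (\<exists>c. V * pauli_mat n s * adj V = c \<cdot>\<^sub>m pauli_mat n t)"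
  have "\<exists>!t. ?P t"
  proof (rule ex_ex1I)
    show "\<exists>t. ?P t"
      using V s unfolding clifford_def by blast
  next
    fix t t'
    assume "?P t" "?P t'"
    then obtain c c' where c: "V * pauli_mat n s * adj V = c \<cdot>\<^sub>m pauli_mat n t"
      and c': "V * pauli_mat n s * adj V = c' \<cdot>\<^sub>m pauli_mat n t'"
      by blast
    have "c \<noteq> 0"
      using clifford_conj_pauli_scalar_nonzero[OF V c] .
    with c c' have "\<forall>j<n. t j = t' j"
      by (metis pauli_mat_scaled_eqD)
    with \<open>?P t\<close> \<open>?P t'\<close> show "t = t'"
      by (blast intro: paulis_eqI)
  qed
  then have "?P (conj_pauli n V s)"
    unfolding conj_pauli_def by (rule theI')
  then show "conj_pauli n V s \<in> paulis n"
    and "\<exists>c. V * pauli_mat n s * adj V = c \<cdot>\<^sub>m pauli_mat n (conj_pauli n V s)"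
    by blast+
qed

lemma inj_on_conj_pauli:
  assumes V: "clifford n V"
  shows "inj_on (conj_pauli n V) (paulis n)"
proof (rule inj_onI)
  fix s s'
  assume s: "s \<in> paulis n" and s': "s' \<in> paulis n" and eq: "conj_pauli n V s = conj_pauli n V s'"
  let ?t = "conj_pauli n V s"
  obtain c where c: "V * pauli_mat n s * adj V = c \<cdot>\<^sub>m pauli_mat n ?t"
    using clifford_conj_pauli(2)[OF V s] by blast
  obtain c' where c': "V * pauli_mat n s' * adj V = c' \<cdot>\<^sub>m pauli_mat n ?t"
    using clifford_conj_pauli(2)[OF V s'] eq by auto
  have "c' \<noteq> 0"
    using clifford_conj_pauli_scalar_nonzero[OF V c'] .
  have V': "unitary_mat (2^n) V"
    using V by (simp add: clifford_def)
  have carr: "V \<in> carrier_mat (2^n) (2^n)" "adj V \<in> carrier_mat (2^n) (2^n)"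
    using unitary_mat_carrier[OF V'] by simp_all
  have "pauli_mat n s = adj V * (V * pauli_mat n s * adj V) * V"
    using unitary_conj_cancel[OF V' pauli_mat_carrier] by simp
  also have "V * pauli_mat n s * adj V = (c / c') \<cdot>\<^sub>m (V * pauli_mat n s' * adj V)"
    using \<open>c' \<noteq> 0\<close> by (simp add: c c' smult_smult_mat)
  also have "adj V * \<dots> * V = (c / c') \<cdot>\<^sub>m (adj V * (V * pauli_mat n s' * adj V) * V)"
    using carr by (intro mult_smult_mult_mat) auto
  also have "\<dots> = (c / c') \<cdot>\<^sub>m pauli_mat n s'"
    using unitary_conj_cancel[OF V' pauli_mat_carrier] by simp
  finally have "1 \<cdot>\<^sub>m pauli_mat n s = (c / c') \<cdot>\<^sub>m pauli_mat n s'"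
    by simp
  then show "s = s'"
    using s s' by (metis pauli_mat_scaled_eqD one_neq_zero paulis_eqI)
qed

definition supported_paulis :: "nat \<Rightarrow> nat set \<Rightarrow> nat \<Rightarrow> (nat \<Rightarrow> pauli) set" where
  "supported_paulis n A w = {t. supported_in t A \<and> weight n t = w}"

lemma supported_paulis_subset_image:
  assumes "A \<subseteq> {0..<n}"
  shows "supported_paulis n A w \<subseteq> (\<lambda>(B, g) j. if j \<in> B then g j else PI) `
           (SIGMA B:{B. B \<subseteq> A \<and> card B = w}. B \<rightarrow>\<^sub>E {PX, PY, PZ})"
proof
  fix t
  assume t: "t \<in> supported_paulis n A w"
  define B where "B = {j. t j \<noteq> PI}"
  have "B \<subseteq> A"
    using t by (auto simp: B_def supported_paulis_def supported_in_def)
  moreover have "{j. j < n \<and> t j \<noteq> PI} = B"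
    using \<open>B \<subseteq> A\<close> assms by (auto simp: B_def)
  then have "card B = w"
    using t by (simp add: supported_paulis_def weight_def)
  moreover have "t j \<in> {PX, PY, PZ}" if "j \<in> B" for j
    using that by (cases "t j") (simp_all add: B_def)
  then have "restrict t B \<in> B \<rightarrow>\<^sub>E {PX, PY, PZ}"
    by simp
  ultimately have "(B, restrict t B) \<in> (SIGMA B:{B. B \<subseteq> A \<and> card B = w}. B \<rightarrow>\<^sub>E {PX, PY, PZ})"
    by blast
  moreover have "t = (\<lambda>(B, g) j. if j \<in> B then g j else PI) (B, restrict t B)"
    by (auto simp: B_def)
  ultimately show "t \<in> (\<lambda>(B, g) j. if j \<in> B then g j else PI) `
           (SIGMA B:{B. B \<subseteq> A \<and> card B = w}. B \<rightarrow>\<^sub>E {PX, PY, PZ})"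
    by (rule rev_image_eqI)
qed

lemma card_supported_paulis:
  assumes "A \<subseteq> {0..<n}"
  shows "finite (supported_paulis n A w)"
    and "card (supported_paulis n A w) \<le> (card A choose w) * 3 ^ w"
proof -
  let ?Bs = "{B. B \<subseteq> A \<and> card B = w}"
  let ?\<Sigma> = "SIGMA B:?Bs. B \<rightarrow>\<^sub>E {PX, PY, PZ}"
  have "finite A"
    using assms by (rule finite_subset) simp
  have fin_Bs: "finite ?Bs"
    by (rule rev_finite_subset[of "Pow A"]) (use \<open>finite A\<close> in auto)
  have fin_B: "finite B" and card_B: "card B = w" if "B \<in> ?Bs" for B
    using that finite_subset[OF _ \<open>finite A\<close>] by simp_all
  have fin_PiE: "finite (B \<rightarrow>\<^sub>E {PX, PY, PZ})" if "B \<in> ?Bs" for B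
    using fin_B[OF that] by (rule finite_PiE) simp
  have fin_\<Sigma>: "finite ?\<Sigma>"
    using fin_Bs fin_PiE by (rule finite_SigmaI)
  then show "finite (supported_paulis n A w)"
    using supported_paulis_subset_image[OF assms] by (rule finite_surj)
  have "card (supported_paulis n A w) \<le> card ?\<Sigma>"
    using fin_\<Sigma> supported_paulis_subset_image[OF assms] by (rule surj_card_le)
  also have "\<dots> = (\<Sum>B\<in>?Bs. card (B \<rightarrow>\<^sub>E {PX, PY, PZ}))"
    using fin_PiE by (intro card_SigmaI[OF fin_Bs]) blast
  also have "\<dots> = (\<Sum>B\<in>?Bs. 3 ^ w)"
  proof (rule sum.cong)
    fix B
    assume B: "B \<in> ?Bs"
    show "card (B \<rightarrow>\<^sub>E {PX, PY, PZ}) = 3 ^ w"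
      using fin_B[OF B] card_B[OF B] by (simp add: card_PiE numeral_3_eq_3)
  qed simp
  also have "\<dots> = (card A choose w) * 3 ^ w"
    using n_subsets[OF \<open>finite A\<close>] by simp
  finally show "card (supported_paulis n A w) \<le> (card A choose w) * 3 ^ w" .
qed

lemma card_le_card_mult_if_injective_cover:
  assumes "finite I" "finite T"
    and cover: "S \<subseteq> (\<Union>i\<in>I. {s \<in> P. f i s \<in> T})"
    and inj: "\<And>i. i \<in> I \<Longrightarrow> inj_on (f i) P"
  shows "card S \<le> card I * card T"
proof -
  let ?G = "\<lambda>i. {s \<in> P. f i s \<in> T}"
  have fin_G: "finite (?G i)" and card_G: "card (?G i) \<le> card T" if "i \<in> I" for i
  proof -
    have "inj_on (f i) (?G i)"
      using inj[OF that] by (rule inj_on_subset) blast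
    moreover have "f i ` ?G i \<subseteq> T"
      by blast
    ultimately show "finite (?G i)" "card (?G i) \<le> card T"
      using \<open>finite T\<close> by (auto intro: inj_on_finite card_inj_on_le)
  qed
  have "card S \<le> card (\<Union>i\<in>I. ?G i)"
    using cover \<open>finite I\<close> fin_G by (intro card_mono) auto
  also have "\<dots> \<le> (\<Sum>i\<in>I. card (?G i))"
    using \<open>finite I\<close> by (rule card_UN_le)
  also have "\<dots> \<le> card I * card T"
    using card_G sum_bounded_above[of I "\<lambda>i. card (?G i)" "card T"] by simp
  finally show ?thesis .
qed

lemma S_set_subset_UN:
  assumes "d \<ge> 1"
  shows "S_set n d U A w
    \<subseteq> (\<Union>i\<in>{1..d}. {s \<in> paulis n. conj_pauli n (prefix n U i) s \<in> supported_paulis n A w})"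
proof
  fix s
  assume s: "s \<in> S_set n d U A w"
  let ?W = "(\<lambda>i. weight n (conj_pauli n (prefix n U i) s)) ` {1..d}"
  have "Min ?W \<in> ?W"
    using assms by (intro Min_in) auto
  then obtain i where "i \<in> {1..d}" "weight n (conj_pauli n (prefix n U i) s) = w"
    using s by (auto simp: S_set_def)
  with s show "s \<in> (\<Union>i\<in>{1..d}. {s \<in> paulis n. conj_pauli n (prefix n U i) s \<in> supported_paulis n A w})"
    by (auto simp: S_set_def supported_paulis_def)
qed

theorem lemma4:
  fixes n d w :: nat and U :: "nat \<Rightarrow> complex mat" and A :: "nat set"
  assumes "d \<ge> 1"
    and "\<forall>i\<in>{1..d}. clifford n (U i)"
    and "A \<subseteq> {0..<n}"
  shows "card (S_set n d U A w) \<le> d * (card A choose w) * 3 ^ w"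
proof -
  have "card (S_set n d U A w) \<le> card {1..d} * card (supported_paulis n A w)"
  proof (rule card_le_card_mult_if_injective_cover)
    show "finite (supported_paulis n A w)"
      using card_supported_paulis(1)[OF assms(3)] .
    show "S_set n d U A w
      \<subseteq> (\<Union>i\<in>{1..d}. {s \<in> paulis n. conj_pauli n (prefix n U i) s \<in> supported_paulis n A w})"
      using S_set_subset_UN[OF assms(1)] .
    show "inj_on (conj_pauli n (prefix n U i)) (paulis n)" if "i \<in> {1..d}" for i
      using that assms(2) by (intro inj_on_conj_pauli clifford_prefix) auto
  qed simp
  also have "\<dots> \<le> d * ((card A choose w) * 3 ^ w)"
    using card_supported_paulis(2)[OF assms(3)] by simp
  finally show ?thesis
    by (simp add: mult.assoc)
qed

end
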